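(* Let $(q(\ell))_{\ell\in\mathbb{Z}}\subset\mathbb{C}$ and $(p(\ell,z))_{(\ell,z)\in\mathbb{Z}^2}\subset\mathbb{C}$ satisfy $q(\ell)=0$ for all $\ell<0$ and $p(\ell,z)=0$ for all $\ell\in\mathbb{Z}$, $z<0$. Define the iterates $q(\ell,0):=\ddot r(\ell)$ and $q(\ell,m):=\ddot r(\ell)+\sum_{z\in\mathbb{Z}}q(\ell-z,m-1)\ddot p_+(\ell,z)$ for $(\ell,m)\in\mathbb{Z}\times\mathbb{N}$. Then for each $(\ell,m)\in\mathbb{Z}\times\mathbb{N}_0$, $$q(\ell,m)=\sum_{z\in\mathbb{Z}}\ddot r(\ell-z)\,\alpha\{\ddot p_+\}(\ell,z,m).$$
   Context: $r(\ell):=\sum_{z\in\mathbb{Z}}q(\ell-z)p(\ell,z)$. $L_0:=\sup\{L\in\mathbb{N}_0:p(\ell,0)\neq0\text{ for all }0\le\ell<L\}\in\mathbb{N}_0\cup\{\infty\}$, assumed $\ge1$; $\mathbb{L}:=\{\ell\in\mathbb{Z}:0\le\ell<L_0\}$. $\ddot r(\ell):=\frac{r(\ell)}{p(\ell,0)}\mathbf 1_{\mathbb{L}}(\ell)$, $\ddot p_+(\ell,z):=\big(\delta_{z,0}-\frac{p(\ell,z)}{p(\ell,0)}\big)\mathbf 1_{\mathbb{L}}(\ell)$ ($\delta_{z,0}=1$ if $z=0$, else $0$). Convolution powers: $\ddot p_+^{*0}(\ell,z):=\delta_{z,0}$, $\ddot p_+^{*j}(\ell,z):=\sum_{z_1\in\mathbb{Z}}\ddot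 p_+(\ell,z_1)\ddot p_+^{*(j-1)}(\ell-z_1,z-z_1)$ for $j\ge1$. $\alpha\{\ddot p_+\}(\ell,z,x):=\sum_{j=0}^{\lfloor x\rfloor}\ddot p_+^{*j}(\ell,z)$ for $(\ell,z,x)\in\mathbb{Z}^2\times\mathbb{R}$. *)

theory Defs
  imports "HOL-Analysis.Analysis" "HOL-Library.Extended_Nat"
begin

definition rr :: "(int \<Rightarrow> complex) \<Rightarrow> (int \<Rightarrow> int \<Rightarrow> complex) \<Rightarrow> int \<Rightarrow> complex" where
  "rr q p l = (\<Sum>\<^sub>\<infinity>z\<in>(UNIV::int set). q (l - z) * p l z)"

definition L0 :: "(int \<Rightarrow> int \<Rightarrow> complex) \<Rightarrow> enat" where
  "L0 p = Sup {enat L | L::nat. \<forall>l::nat. l < L \<longrightarrow> p (int l) 0 \<noteq> 0}"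

definition LL :: "(int \<Rightarrow> int \<Rightarrow> complex) \<Rightarrow> int set" where
  "LL p = {l::int. 0 \<le> l \<and> enat (nat l) < L0 p}"

definition rdd :: "(int \<Rightarrow> complex) \<Rightarrow> (int \<Rightarrow> int \<Rightarrow> complex) \<Rightarrow> int \<Rightarrow> complex" where
  "rdd q p l = (if l \<in> LL p then rr q p l / p l 0 else 0)"

definition pdd :: "(int \<Rightarrow> int \<Rightarrow> complex) \<Rightarrow> int \<Rightarrow> int \<Rightarrow> complex" where
  "pdd p l z = (if l \<in> LL p then (if z = 0 then 1 else 0) - p l z / p l 0 else 0)"

primrec pconv :: "(int \<Rightarrow> int \<Rightarrow> complex) \<Rightarrow> nat \<Rightarrow> int \<Rightarrow> int \<Rightarrow> complex" where
  "pconv p 0 l z = (if z = 0 then 1 else 0)"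
| "pconv p (Suc j) l z = (\<Sum>\<^sub>\<infinity>z1\<in>(UNIV::int set). pdd p l z1 * pconv p j (l - z1) (z - z1))"

definition alpha :: "(int \<Rightarrow> int \<Rightarrow> complex) \<Rightarrow> int \<Rightarrow> int \<Rightarrow> real \<Rightarrow> complex" where
  "alpha p l z x = (\<Sum>j\<in>{0..\<lfloor>x\<rfloor>}. pconv p (nat j) l z)"

primrec qit :: "(int \<Rightarrow> complex) \<Rightarrow> (int \<Rightarrow> int \<Rightarrow> complex) \<Rightarrow> nat \<Rightarrow> int \<Rightarrow> complex" where
  "qit q p 0 l = rdd q p l"
| "qit q p (Suc m) l = rdd q p l + (\<Sum>\<^sub>\<infinity>z\<in>(UNIV::int set). qit q p m (l - z) * pdd p l z)"

end

theory Submission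
  imports Defs
begin

text \<open>Writing \<open>r\<close>, \<open>p\<^sub>+\<close> for the doubly dotted \<open>r\<close>, \<open>p\<^sub>+\<close>, let \<open>P\<close> be the
  operator \<open>(P f)(l) = \<Sum>\<^sub>z f(l - z) p\<^sub>+(l, z)\<close>. The recursion says
  \<open>q(\<cdot>, m + 1) = r + P q(\<cdot>, m)\<close>, so \<open>q(\<cdot>, m) = \<Sum>\<^bsub>j \<le> m\<^esub> P\<^sup>j r\<close>, a truncated Neumann series.
  Operators of this shape compose by composing their kernels, and \<open>p\<^sub>+\<^sup>*\<^sup>j\<close> is exactly
  the kernel of \<open>P\<^sup>j\<close>; summing over \<open>j \<le> m\<close> gives the kernel \<open>\<alpha>{p\<^sub>+}(\<cdot>, \<cdot>, m)\<close>.
  All sums are finite because the kernels vanish for \<open>z < 0\<close> and the functions they act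
  on vanish on negative arguments.\<close>

lemma infsum_eq_sum_if_vanishes_outside:
  fixes f :: "'a \<Rightarrow> 'b::{comm_monoid_add, t2_space}"
  assumes "finite A" and "\<And>x. x \<notin> A \<Longrightarrow> f x = 0"
  shows "infsum f UNIV = sum f A"
proof -
  have "infsum f UNIV = infsum f A"
    by (rule infsum_cong_neutral) (use assms(2) in auto)
  with assms(1) show ?thesis
    by simp
qed

definition causal_kernel :: "(int \<Rightarrow> int \<Rightarrow> 'a::zero) \<Rightarrow> bool" where
  "causal_kernel K \<longleftrightarrow> (\<forall>l z. z < 0 \<longrightarrow> K l z = 0)"

definition nonneg_supported :: "(int \<Rightarrow> 'a::zero) \<Rightarrow> bool" where
  "nonneg_supported f \<longleftrightarrow> (\<forall>l. l < 0 \<longrightarrow> f l = 0)"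

definition kernel_apply ::
    "(int \<Rightarrow> int \<Rightarrow> 'a::{comm_semiring_1, t2_space}) \<Rightarrow> (int \<Rightarrow> 'a) \<Rightarrow> int \<Rightarrow> 'a" where
  "kernel_apply K f l = (\<Sum>\<^sub>\<infinity>z\<in>UNIV. f (l - z) * K l z)"

definition kernel_comp ::
    "(int \<Rightarrow> int \<Rightarrow> 'a::{comm_semiring_1, t2_space}) \<Rightarrow> (int \<Rightarrow> int \<Rightarrow> 'a) \<Rightarrow> int \<Rightarrow> int \<Rightarrow> 'a" where
  "kernel_comp K M l z = (\<Sum>\<^sub>\<infinity>z1\<in>UNIV. K l z1 * M (l - z1) (z - z1))"

lemma kernel_apply_eq_sum:
  assumes "causal_kernel K" "nonneg_supported f" "finite A" "{0..l} \<subseteq> A"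
  shows "kernel_apply K f l = (\<Sum>z\<in>A. f (l - z) * K l z)"
  unfolding kernel_apply_def
proof (rule infsum_eq_sum_if_vanishes_outside)
  fix z assume "z \<notin> A"
  with assms(4) have "z \<notin> {0..l}"
    by blast
  then have "z < 0 \<or> l - z < 0"
    by auto
  with assms(1,2) show "f (l - z) * K l z = 0"
    by (auto simp: causal_kernel_def nonneg_supported_def)
qed (fact assms(3))

lemma nonneg_supported_kernel_apply:
  assumes "causal_kernel K" "nonneg_supported f"
  shows "nonneg_supported (kernel_apply K f)"
  using kernel_apply_eq_sum[OF assms finite.emptyI] by (simp add: nonneg_supported_def)

lemma kernel_comp_eq_sum:
  assumes "causal_kernel K" "causal_kernel M" "finite A" "{0..z} \<subseteq> A"
  shows "kernel_comp K M l z = (\<Sum>z1\<in>A. K l z1 * M (l - z1) (z - z1))"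
  unfolding kernel_comp_def
proof (rule infsum_eq_sum_if_vanishes_outside)
  fix z1 assume "z1 \<notin> A"
  with assms(4) have "z1 \<notin> {0..z}"
    by blast
  then have "z1 < 0 \<or> z - z1 < 0"
    by auto
  with assms(1,2) show "K l z1 * M (l - z1) (z - z1) = 0"
    by (auto simp: causal_kernel_def)
qed (fact assms(3))

lemma causal_kernel_comp:
  assumes "causal_kernel K" "causal_kernel M"
  shows "causal_kernel (kernel_comp K M)"
  using kernel_comp_eq_sum[OF assms finite.emptyI] by (simp add: causal_kernel_def)

lemma kernel_apply_comp:
  assumes K: "causal_kernel K" and M: "causal_kernel M" and f: "nonneg_supported f"
  shows "kernel_apply (kernel_comp K M) f = kernel_apply K (kernel_apply M f)"
proof
  fix l
  have inner: "kernel_apply M f (l - z1) = (\<Sum>z\<in>{0..l}. f (l - z) * M (l - z1) (z - z1))"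
    if "z1 \<in> {0..l}" for z1
  proof -
    have "bij_betw (\<lambda>z. z - z1) UNIV UNIV"
      by (rule bij_betwI[where g = "\<lambda>w. w + z1"]) auto
    from infsum_reindex_bij_betw[OF this, of "\<lambda>w. f (l - z1 - w) * M (l - z1) w"]
    have "kernel_apply M f (l - z1) = (\<Sum>\<^sub>\<infinity>z\<in>UNIV. f (l - z) * M (l - z1) (z - z1))"
      by (simp add: kernel_apply_def)
    also have "\<dots> = (\<Sum>z\<in>{0..l}. f (l - z) * M (l - z1) (z - z1))"
    proof (rule infsum_eq_sum_if_vanishes_outside)
      fix z assume "z \<notin> {0..l}"
      with that have "l - z < 0 \<or> z - z1 < 0"
        by auto
      with M f show "f (l - z) * M (l - z1) (z - z1) = 0"
        by (auto simp: causal_kernel_def nonneg_supported_def)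
    qed simp
    finally show ?thesis .
  qed
  have "kernel_apply (kernel_comp K M) f l = (\<Sum>z\<in>{0..l}. f (l - z) * kernel_comp K M l z)"
    by (rule kernel_apply_eq_sum[OF causal_kernel_comp[OF K M] f]) auto
  also have "\<dots> = (\<Sum>z\<in>{0..l}. \<Sum>z1\<in>{0..l}. f (l - z) * (K l z1 * M (l - z1) (z - z1)))"
    by (intro sum.cong refl, subst kernel_comp_eq_sum[OF K M, of "{0..l}"])
      (auto simp: sum_distrib_left)
  also have "\<dots> = (\<Sum>z1\<in>{0..l}. (\<Sum>z\<in>{0..l}. f (l - z) * M (l - z1) (z - z1)) * K l z1)"
    by (subst sum.swap) (simp add: sum_distrib_left sum_distrib_right ac_simps)
  also have "\<dots> = (\<Sum>z1\<in>{0..l}. kernel_apply M f (l - z1) * K l z1)"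
    by (simp add: inner)
  also have "\<dots> = kernel_apply K (kernel_apply M f) l"
    by (rule kernel_apply_eq_sum[OF K nonneg_supported_kernel_apply[OF M f], symmetric]) auto
  finally show "kernel_apply (kernel_comp K M) f l = kernel_apply K (kernel_apply M f) l" .
qed

lemma kernel_apply_delta: "kernel_apply (\<lambda>l z. if z = 0 then 1 else 0) f = f"
proof
  fix l
  have "kernel_apply (\<lambda>l z. if z = 0 then 1 else 0) f l
      = (\<Sum>z\<in>{0}. f (l - z) * (if z = 0 then 1 else 0))"
    unfolding kernel_apply_def by (rule infsum_eq_sum_if_vanishes_outside) auto
  then show "kernel_apply (\<lambda>l z. if z = 0 then 1 else 0) f l = f l"
    by simp
qed

lemma kernel_apply_sum_kernel:
  assumes "finite J" "\<And>j. j \<in> J \<Longrightarrow> causal_kernel (K j)" "nonneg_supported f"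
  shows "kernel_apply (\<lambda>l z. \<Sum>j\<in>J. K j l z) f l = (\<Sum>j\<in>J. kernel_apply (K j) f l)"
proof -
  have "causal_kernel (\<lambda>l z. \<Sum>j\<in>J. K j l z)"
    using assms(2) by (simp add: causal_kernel_def)
  then have "kernel_apply (\<lambda>l z. \<Sum>j\<in>J. K j l z) f l = (\<Sum>z\<in>{0..l}. \<Sum>j\<in>J. f (l - z) * K j l z)"
    using assms(3) by (simp add: kernel_apply_eq_sum[where A = "{0..l}"] sum_distrib_left)
  also have "\<dots> = (\<Sum>j\<in>J. kernel_apply (K j) f l)"
    using assms by (subst sum.swap) (simp add: kernel_apply_eq_sum[where A = "{0..l}"])
  finally show ?thesis .
qed

lemma kernel_apply_sum:
  assumes "causal_kernel K" "finite J" "\<And>j. j \<in> J \<Longrightarrow> nonneg_supported (F j)"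
  shows "kernel_apply K (\<lambda>l. \<Sum>j\<in>J. F j l) l = (\<Sum>j\<in>J. kernel_apply K (F j) l)"
proof -
  have "nonneg_supported (\<lambda>l. \<Sum>j\<in>J. F j l)"
    using assms(3) by (simp add: nonneg_supported_def)
  then have "kernel_apply K (\<lambda>l. \<Sum>j\<in>J. F j l) l = (\<Sum>z\<in>{0..l}. \<Sum>j\<in>J. F j (l - z) * K l z)"
    using assms(1) by (simp add: kernel_apply_eq_sum[where A = "{0..l}"] sum_distrib_right)
  also have "\<dots> = (\<Sum>j\<in>J. kernel_apply K (F j) l)"
    using assms by (subst sum.swap) (simp add: kernel_apply_eq_sum[where A = "{0..l}"])
  finally show ?thesis .
qed

lemma nonneg_supported_funpow_kernel_apply:
  assumes "causal_kernel K" "nonneg_supported f"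
  shows "nonneg_supported ((kernel_apply K ^^ j) f)"
  by (induction j) (simp_all add: assms nonneg_supported_kernel_apply)

lemma causal_kernel_pdd: "causal_kernel p \<Longrightarrow> causal_kernel (pdd p)"
  by (simp add: causal_kernel_def pdd_def)

lemma nonneg_supported_rdd: "nonneg_supported (rdd q p)"
  by (simp add: nonneg_supported_def rdd_def LL_def)

lemma pconv_0_eq_delta: "pconv p 0 = (\<lambda>l z. if z = 0 then 1 else 0)"
  by (simp add: fun_eq_iff)

lemma pconv_Suc_eq_kernel_comp: "pconv p (Suc j) = kernel_comp (pdd p) (pconv p j)"
  by (simp add: fun_eq_iff kernel_comp_def)

lemma causal_kernel_pconv:
  assumes "causal_kernel p"
  shows "causal_kernel (pconv p j)"
proof (induction j)
  case 0
  then show ?case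
    by (simp add: causal_kernel_def)
next
  case (Suc j)
  then show ?case
    unfolding pconv_Suc_eq_kernel_comp
    by (intro causal_kernel_comp causal_kernel_pdd assms)
qed

lemma kernel_apply_pconv:
  assumes p: "causal_kernel p" and f: "nonneg_supported f"
  shows "kernel_apply (pconv p j) f = (kernel_apply (pdd p) ^^ j) f"
proof (induction j)
  case 0
  then show ?case
    by (simp add: pconv_0_eq_delta kernel_apply_delta)
next
  case (Suc j)
  have "kernel_apply (pconv p (Suc j)) f = kernel_apply (pdd p) (kernel_apply (pconv p j) f)"
    unfolding pconv_Suc_eq_kernel_comp
    by (rule kernel_apply_comp[OF causal_kernel_pdd[OF p] causal_kernel_pconv[OF p] f])
  with Suc.IH show ?case
    by (simp del: pconv.simps)
qed

lemma qit_eq_neumann_sum: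
  assumes p: "causal_kernel p"
  shows "qit q p m = (\<lambda>l. \<Sum>j\<le>m. (kernel_apply (pdd p) ^^ j) (rdd q p) l)"
proof (induction m)
  case 0
  then show ?case
    by (simp add: fun_eq_iff)
next
  case (Suc m)
  have "qit q p (Suc m) l = rdd q p l + (\<Sum>j\<le>m. (kernel_apply (pdd p) ^^ Suc j) (rdd q p) l)"
    for l
  proof -
    have "qit q p (Suc m) l = rdd q p l + kernel_apply (pdd p) (qit q p m) l"
      by (simp add: kernel_apply_def)
    also have "\<dots> = rdd q p l + (\<Sum>j\<le>m. (kernel_apply (pdd p) ^^ Suc j) (rdd q p) l)"
      unfolding Suc.IH
      by (simp add: kernel_apply_sum causal_kernel_pdd p
          nonneg_supported_funpow_kernel_apply nonneg_supported_rdd)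
    finally show ?thesis .
  qed
  then show ?case
    by (simp add: fun_eq_iff sum.atMost_Suc_shift del: sum.atMost_Suc funpow.simps)
qed

lemma alpha_of_nat: "alpha p l z (real m) = (\<Sum>j\<le>m. pconv p j l z)"
  unfolding alpha_def by (simp, rule sum.reindex_bij_witness[of _ int nat]) auto

theorem lemma2:
  fixes q :: "int \<Rightarrow> complex" and p :: "int \<Rightarrow> int \<Rightarrow> complex"
  assumes "\<And>l. l < 0 \<Longrightarrow> q l = 0"
    and "\<And>l z. z < 0 \<Longrightarrow> p l z = 0"
    and "L0 p \<ge> 1"
  shows "\<forall>(l::int) (m::nat). qit q p m l = (\<Sum>\<^sub>\<infinity>z\<in>(UNIV::int set). rdd q p (l - z) * alpha p l z (real m))"
proof (intro allI)
  \<comment> \<open>Only the causality of \<open>p\<close> is used: \<open>r\<close> and \<open>p\<^sub>+\<close> vanish outside \<open>\<bbbL> \<subseteq> \<nat>\<close> by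
    definition, whatever \<open>q\<close> and \<open>L\<^sub>0\<close> are.\<close>
  fix l :: int and m :: nat
  have p: "causal_kernel p"
    using assms(2) by (simp add: causal_kernel_def)
  have "(\<Sum>\<^sub>\<infinity>z\<in>UNIV. rdd q p (l - z) * alpha p l z (real m))
      = kernel_apply (\<lambda>l z. \<Sum>j\<le>m. pconv p j l z) (rdd q p) l"
    by (simp add: kernel_apply_def alpha_of_nat)
  also have "\<dots> = (\<Sum>j\<le>m. kernel_apply (pconv p j) (rdd q p) l)"
    by (simp add: kernel_apply_sum_kernel causal_kernel_pconv p nonneg_supported_rdd)
  also have "\<dots> = qit q p m l"
    by (simp add: kernel_apply_pconv qit_eq_neumann_sum p nonneg_supported_rdd)
  finally show "qit q p m l = (\<Sum>\<^sub>\<infinity>z\<in>UNIV. rdd q p (l - z) * alpha p l z (real m))"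
    by (rule sym)
qed

end
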